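(* Let $j_0\ge1$ be an integer, $M>0$ and $L>2$. Let $(a_j)_{j\ge1}$, $(b_j)_{j\ge0}$, $(d_j)_{j\ge0}$ be sequences of nonnegative real numbers such that $a_{j_0}\le M$, $b_{j_0}\le M$, $d_{j_0}\le M$, and for all $j\ge j_0+1$: $$b_j\le b_{j-1},\qquad a_j+b_j\le L\,a_{j-1},\qquad d_j\le M2^{-j},$$ and $$\text{if } a_j\ge\tfrac12 a_{j-1}\ \text{and}\ a_j\ge\max\{2^{-j},d_{j-1}\},\ \text{then } b_j\le L(b_{j-1}-b_j).$$ Then there exist $\theta=\theta(L)\in(1/2,1)$ depending only on $L$ and $C_0=C_0(L,j_0)$ depending only on $L$ and $j_0$ such that $$b_{j+1}\le C_0(M+1)\big(\theta^j+j\theta^j\big)\qquad\text{for all } j\ge j_0+1.$$ *)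

theory Defs
  imports Complex_Main
begin

end

theory Submission
  imports Defs
begin

text \<open>
  Choose \<open>p\<close> with \<open>(L/(L+1))^p L < 1\<close> and track the potential \<open>P j = b j ^ p * a j\<close>.
  When \<open>a j\<close> halves, \<open>P\<close> halves because \<open>b\<close> is nonincreasing; when it does not halve
  but is not small, \<open>b\<close> contracts by the factor \<open>L/(L+1)\<close> while \<open>a\<close> grows at most by
  \<open>L\<close>, so \<open>P\<close> shrinks by \<open>(L/(L+1))^p L\<close>; otherwise \<open>a j\<close> is already of order
  \<open>(M+1) 2^-j\<close>. Hence \<open>P\<close> decays like \<open>\<eta>^j\<close> with \<open>\<eta> < 1\<close>, and
  \<open>b (j+1) ^ (p+1) \<le> b j ^ p * L a j = L P j\<close> gives decay of \<open>b\<close> at rate \<open>\<theta> = \<eta> ^ (1/(p+1))\<close>.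
\<close>

lemma potential_contracts:
  fixes a a' b b' L \<eta> :: real and p :: nat
  assumes L: "L > 0" and contraction: "(L/(L+1))^p * L \<le> \<eta>" and \<eta>: "1/2 \<le> \<eta>"
    and a: "0 \<le> a" and a': "0 \<le> a'" and b': "0 \<le> b'" and b'_le: "b' \<le> b"
    and growth: "a' + b' \<le> L * a"
    and decrease: "a/2 \<le> a' \<Longrightarrow> b' \<le> L * (b - b')"
  shows "b'^p * a' \<le> \<eta> * (b^p * a)"
proof -
  have b: "0 \<le> b" using b' b'_le by linarith
  then have P: "0 \<le> b^p * a" using a by simp
  show ?thesis
  proof (cases "a' < a/2")
    case True
    have "b'^p * a' \<le> b^p * (a/2)"
      using True a' b' b'_le by (intro mult_mono power_mono) auto
    also have "\<dots> \<le> \<eta> * (b^p * a)" using mult_right_mono[OF \<eta> P] by simp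
    finally show ?thesis .
  next
    case False
    have "b' * (L+1) \<le> L * b" using decrease False by (simp add: algebra_simps)
    then have "b' \<le> (L/(L+1)) * b" using L by (simp add: field_simps)
    then have "b'^p \<le> (L/(L+1))^p * b^p"
      using b' by (metis power_mono power_mult_distrib)
    then have "b'^p * a' \<le> ((L/(L+1))^p * b^p) * (L * a)"
      using growth a' b b' L by (intro mult_mono) auto
    also have "\<dots> = ((L/(L+1))^p * L) * (b^p * a)" by simp
    also have "\<dots> \<le> \<eta> * (b^p * a)" using contraction P by (rule mult_right_mono)
    finally show ?thesis .
  qed
qed

lemma geometric_bound_induct:
  fixes u :: "nat \<Rightarrow> real" and X \<eta> :: real
  assumes "u 0 \<le> X" and "0 \<le> \<eta>"
    and "\<And>n. u (Suc n) \<le> \<eta> * u n \<or> u (Suc n) \<le> X * \<eta>^Suc n"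
  shows "u n \<le> X * \<eta>^n"
proof (induction n)
  case 0
  then show ?case using assms(1) by simp
next
  case (Suc n)
  have "\<eta> * u n \<le> X * \<eta>^Suc n" using mult_left_mono[OF Suc assms(2)] by (simp add: mult_ac)
  then show ?case using assms(3)[of n] by linarith
qed

lemma decay_rate_exists:
  fixes L :: real
  assumes L: "L > 2"
  obtains p :: nat and \<eta> \<theta> :: real
  where "(L/(L+1))^p * L \<le> \<eta>" "1/2 \<le> \<eta>" "\<theta>^Suc p = \<eta>" "1/2 < \<theta>" "\<theta> < 1"
proof -
  obtain p where p: "(L/(L+1))^p < 1/L"
    using L real_arch_pow_inv[of "1/L" "L/(L+1)"] by auto
  define \<eta> where "\<eta> = max (3/4) ((L/(L+1))^p * L)"
  have \<eta>: "3/4 \<le> \<eta>" "\<eta> < 1" "(L/(L+1))^p * L \<le> \<eta>"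
    using p L by (auto simp: \<eta>_def field_simps)
  define \<theta> where "\<theta> = root (Suc p) \<eta>"
  have \<theta>: "\<theta>^Suc p = \<eta>" "0 < \<theta>" "\<theta> < 1"
    using \<eta> unfolding \<theta>_def by (simp_all only: real_root_pow_pos2) (auto simp: real_root_lt_1_iff)
  have "\<theta>^Suc p \<le> \<theta>^1" using \<theta> by (intro power_decreasing) auto
  then have "\<eta> \<le> \<theta>" by (metis \<theta>(1) power_one_right)
  then have "1/2 < \<theta>" using \<eta> by simp
  with \<eta> \<theta> show thesis by (intro that[of p \<eta> \<theta>]) auto
qed

locale decay_recursion =
  fixes L M \<eta> :: real and p j0 :: nat and a b d :: "nat \<Rightarrow> real"
  assumes L_gt_2: "L > 2" and contraction: "(L/(L+1))^p * L \<le> \<eta>" and \<eta>_ge: "1/2 \<le> \<eta>"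
    and j0_pos: "j0 \<ge> 1" and M_pos: "M > 0"
    and a_nonneg: "\<And>j. j \<ge> 1 \<Longrightarrow> 0 \<le> a j" and b_nonneg: "\<And>j. 0 \<le> b j"
    and a_j0: "a j0 \<le> M" and b_j0: "b j0 \<le> M" and d_j0: "d j0 \<le> M"
    and b_decr: "\<And>j. j \<ge> j0+1 \<Longrightarrow> b j \<le> b (j-1)"
    and a_growth: "\<And>j. j \<ge> j0+1 \<Longrightarrow> a j + b j \<le> L * a (j-1)"
    and d_decay: "\<And>j. j \<ge> j0+1 \<Longrightarrow> d j \<le> M * (1/2)^j"
    and b_drop: "\<And>j. j \<ge> j0+1 \<Longrightarrow> a (j-1) / 2 \<le> a j \<Longrightarrow> max ((1/2)^j) (d (j-1)) \<le> a j
                   \<Longrightarrow> b j \<le> L * (b (j-1) - b j)"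
begin

definition potential :: "nat \<Rightarrow> real" where
  "potential j = b j ^ p * a j"

lemma b_le_M: "b (j0 + n) \<le> M"
proof (induction n)
  case 0
  then show ?case using b_j0 by simp
next
  case (Suc n)
  then show ?case using b_decr[of "j0 + Suc n"] by simp
qed

lemma d_bound:
  assumes "j0 \<le> i"
  shows "d i \<le> M * 2^j0 * (1/2)^i"
proof (cases "i = j0")
  case True
  then show ?thesis using d_j0 by (simp add: power_one_over)
next
  case False
  have "M * (1/2)^i \<le> M * 2^j0 * (1/2)^i" using M_pos by simp
  then show ?thesis using d_decay[of i] assms False by simp
qed

lemma a_bound_if_small:
  assumes j: "j \<ge> j0+1" and small: "\<not> max ((1/2)^j) (d (j-1)) \<le> a j"
  shows "a j \<le> (M+1) * 2^(j0+1) * (1/2)^j"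
proof -
  have "d (j-1) \<le> M * 2^j0 * (1/2)^(j-1)" using d_bound j by simp
  also have "\<dots> = M * 2^(j0+1) * (1/2)^j"
    using j by (cases j) (auto simp: power_one_over)
  finally have "a j \<le> max 1 (M * 2^(j0+1)) * (1/2)^j"
    using small by (auto simp: max_mult_distrib_right)
  also have "\<dots> \<le> (M+1) * 2^(j0+1) * (1/2)^j"
  proof -
    have "(1::real) \<le> 2^(j0+1)" by (rule one_le_power) simp
    then have "max 1 (M * 2^(j0+1)) \<le> (M+1) * 2^(j0+1)"
      using M_pos by (simp add: distrib_right add_increasing)
    then show ?thesis by (simp add: mult_right_mono)
  qed
  finally show ?thesis .
qed

lemma potential_bound: "potential (j0 + n) \<le> (M+1)^Suc p * 2^(j0+1) * \<eta>^n"
proof (rule geometric_bound_induct[where u = "\<lambda>n. potential (j0 + n)"])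
  have "b j0 ^ p \<le> (M+1)^p" using b_nonneg b_j0 by (intro power_mono) auto
  then have "potential j0 \<le> (M+1)^p * (M+1)"
    unfolding potential_def using a_j0 a_nonneg j0_pos M_pos by (intro mult_mono) auto
  also have "\<dots> \<le> (M+1)^Suc p * 2^(j0+1)"
    using M_pos one_le_power[of "2::real" "j0+1"] by (simp add: mult.commute[of "M+1"])
  finally show "potential (j0 + 0) \<le> (M+1)^Suc p * 2^(j0+1)" by simp
next
  show "0 \<le> \<eta>" using \<eta>_ge by simp
next
  fix n
  define j where "j = j0 + Suc n"
  have j: "j \<ge> j0+1" "j - 1 = j0 + n" using j0_pos by (auto simp: j_def)
  have a_j: "0 \<le> a j" "0 \<le> a (j-1)" using a_nonneg j j0_pos by auto
  show "potential (j0 + Suc n) \<le> \<eta> * potential (j0 + n)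
        \<or> potential (j0 + Suc n) \<le> (M+1)^Suc p * 2^(j0+1) * \<eta>^Suc n"
  proof (cases "max ((1/2)^j) (d (j-1)) \<le> a j")
    case True
    have "potential j \<le> \<eta> * potential (j-1)"
      unfolding potential_def
      using L_gt_2 contraction \<eta>_ge a_j b_nonneg b_decr[OF j(1)] a_growth[OF j(1)]
        b_drop[OF j(1) _ True]
      by (intro potential_contracts) auto
    then show ?thesis using j by (simp add: j_def)
  next
    case False
    have "b j ^ p \<le> (M+1)^p"
      using b_nonneg b_le_M[of "Suc n"] M_pos by (intro power_mono) (auto simp: j_def)
    then have "potential j \<le> (M+1)^p * ((M+1) * 2^(j0+1) * (1/2)^j)"
      unfolding potential_def using a_bound_if_small[OF j(1) False] a_j M_pos
      by (intro mult_mono) auto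
    also have "\<dots> = (M+1)^Suc p * 2^(j0+1) * (1/2)^j" by simp
    also have "\<dots> \<le> (M+1)^Suc p * 2^(j0+1) * \<eta>^Suc n"
    proof -
      have "(1/2::real)^j \<le> (1/2)^Suc n" by (intro power_decreasing) (auto simp: j_def)
      also have "\<dots> \<le> \<eta>^Suc n" using \<eta>_ge by (intro power_mono) auto
      finally show ?thesis using M_pos by (intro mult_left_mono) auto
    qed
    finally show ?thesis by (simp add: j_def)
  qed
qed


lemma b_bound:
  assumes \<theta>: "0 < \<theta>" "\<theta>^Suc p = \<eta>" and j: "j \<ge> j0+1"
  shows "b (j+1) \<le> L * 2^(j0+1) / \<theta>^j0 * (M+1) * \<theta>^j"
proof -
  obtain n where n: "j = j0 + n" using j le_add1 le_add_diff_inverse le_trans by metis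
  define c where "c = L * 2^(j0+1)"
  have c: "1 \<le> c"
    using L_gt_2 one_le_power[of "2::real" "j0+1"] mult_mono[of 1 L 1 "2^(j0+1)::real"]
    by (simp add: c_def)
  have "b (j+1) ^ Suc p = b (j+1) ^ p * b (j+1)" by simp
  also have "\<dots> \<le> b j ^ p * (L * a j)"
    using b_nonneg b_decr[of "j+1"] a_growth[of "j+1"] a_nonneg[of "j+1"] j
    by (intro mult_mono power_mono) auto
  also have "\<dots> = L * potential j" by (simp add: potential_def)
  also have "\<dots> \<le> L * ((M+1)^Suc p * 2^(j0+1) * \<eta>^n)"
    using potential_bound[of n] n L_gt_2 by simp
  also have "\<dots> = c * ((M+1) * \<theta>^n)^Suc p"
    by (simp add: c_def \<theta>(2)[symmetric] power_mult_distrib power_mult[symmetric] mult.commute)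
  also have "\<dots> \<le> c^Suc p * ((M+1) * \<theta>^n)^Suc p"
  proof (rule mult_right_mono)
    show "c \<le> c^Suc p" using power_increasing[of 1 "Suc p" c] c by simp
  qed (use M_pos \<theta> in simp)
  also have "\<dots> = (c * ((M+1) * \<theta>^n)) ^ Suc p" by (rule power_mult_distrib[symmetric])
  finally have "b (j+1) \<le> c * ((M+1) * \<theta>^n)"
    by (rule power_le_imp_le_base) (use c M_pos \<theta> in simp)
  also have "\<dots> = L * 2^(j0+1) / \<theta>^j0 * (M+1) * \<theta>^j"
    using \<theta> by (simp add: c_def n power_add)
  finally show ?thesis .
qed

end


theorem lemma3p2:
  fixes L :: real
  assumes "L > 2"
  shows "\<exists>\<theta>::real. 1/2 < \<theta> \<and> \<theta> < 1 \<and>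
    (\<forall>j0::nat. j0 \<ge> 1 \<longrightarrow> (\<exists>C0::real.
      \<forall>(M::real) (a::nat \<Rightarrow> real) (b::nat \<Rightarrow> real) (d::nat \<Rightarrow> real).
        M > 0 \<and>
        (\<forall>j\<ge>1. a j \<ge> 0) \<and> (\<forall>j. b j \<ge> 0) \<and> (\<forall>j. d j \<ge> 0) \<and>
        a j0 \<le> M \<and> b j0 \<le> M \<and> d j0 \<le> M \<and>
        (\<forall>j\<ge>j0+1.
           b j \<le> b (j-1) \<and>
           a j + b j \<le> L * a (j-1) \<and>
           d j \<le> M * (1/2)^j \<and>
           ((a j \<ge> a (j-1) / 2 \<and> a j \<ge> max ((1/2)^j) (d (j-1)))
              \<longrightarrow> b j \<le> L * (b (j-1) - b j)))
        \<longrightarrow> (\<forall>j\<ge>j0+1. b (j+1) \<le> C0 * (M+1) * (\<theta>^j + real j * \<theta>^j))))"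
proof -
  obtain p \<eta> \<theta> where rate: "(L/(L+1))^p * L \<le> \<eta>" "1/2 \<le> \<eta>" "\<theta>^Suc p = \<eta>"
    and \<theta>: "1/2 < \<theta>" "\<theta> < 1"
    using decay_rate_exists[OF assms] by blast
  have b_decay: "b (j+1) \<le> L * 2^(j0+1) / \<theta>^j0 * (M+1) * (\<theta>^j + real j * \<theta>^j)"
    if "decay_recursion L M \<eta> p j0 a b d" "j \<ge> j0+1" for M a b d j0 j
  proof -
    interpret decay_recursion L M \<eta> p j0 a b d by (rule that(1))
    have "b (j+1) \<le> L * 2^(j0+1) / \<theta>^j0 * (M+1) * \<theta>^j"
      using b_bound[of \<theta> j] \<theta> rate that(2) by simp
    also have "\<dots> \<le> L * 2^(j0+1) / \<theta>^j0 * (M+1) * (\<theta>^j + real j * \<theta>^j)"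
      using L_gt_2 M_pos \<theta> by (intro mult_left_mono) auto
    finally show ?thesis .
  qed
  show ?thesis
    apply (rule exI[of _ \<theta>], intro conjI allI impI)
    subgoal using \<theta> by simp
    subgoal using \<theta> by simp
    subgoal for j0
      apply (intro exI[of _ "L * 2^(j0+1) / \<theta>^j0"] allI impI)
      subgoal for M a b d j
        by (rule b_decay[where M = M and a = a and b = b and d = d]) (unfold_locales, use assms rate in auto)
      done
    done
qed

end
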